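(* The graphs $M_2$ and $M_3$ are not in $B_0$.
   Context: $M_2$ is the graph on vertices $a,b,c,d,e,f,g$ with edges $ab,ac,ad,be,cf,dg$. $M_3$ is the graph on vertices $a,b,c,d,e,f$ with edges $ab,ac,bc,ad,be,cf$. $B_0$ is the class of graphs having an EPG representation (a set of paths on a rectangular grid, one per vertex, two vertices adjacent iff their paths share a grid edge) in which no path has a bend, i.e. each path lies on a single grid line. *)

theory Defs
  imports Main
begin

text \<open>Edges of the (infinite) integer grid: \<open>HEdge x y\<close> joins (x,y) and (x+1,y);
  \<open>VEdge x y\<close> joins (x,y) and (x,y+1).\<close>
datatype grid_edge = HEdge int int | VEdge int int

definition straight_paths :: "grid_edge set set" where
  "straight_paths =
     {{HEdge x y | x. lo \<le> x \<and> x < hi} | y lo hi. lo < hi} \<union>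
     {{VEdge x y | y. lo \<le> y \<and> y < hi} | x lo hi. lo < hi}"

definition B0 :: "'a set \<Rightarrow> ('a \<Rightarrow> 'a \<Rightarrow> bool) \<Rightarrow> bool" where
  "B0 V adj \<longleftrightarrow> (\<exists>P :: 'a \<Rightarrow> grid_edge set.
      (\<forall>v\<in>V. P v \<in> straight_paths) \<and>
      (\<forall>u\<in>V. \<forall>v\<in>V. u \<noteq> v \<longrightarrow> (adj u v \<longleftrightarrow> P u \<inter> P v \<noteq> {})))"

text \<open>Vertices a,b,c,d,e,f,g are encoded as 0,1,2,3,4,5,6.\<close>
definition adj_of :: "(nat \<times> nat) set \<Rightarrow> nat \<Rightarrow> nat \<Rightarrow> bool" where
  "adj_of E u v \<longleftrightarrow> (u, v) \<in> E \<or> (v, u) \<in> E"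

definition M2_V :: "nat set" where "M2_V = {0,1,2,3,4,5,6}"
text \<open>ab, ac, ad, be, cf, dg\<close>
definition M2_E :: "(nat \<times> nat) set" where
  "M2_E = {(0,1),(0,2),(0,3),(1,4),(2,5),(3,6)}"

definition M3_V :: "nat set" where "M3_V = {0,1,2,3,4,5}"
text \<open>ab, ac, bc, ad, be, cf\<close>
definition M3_E :: "(nat \<times> nat) set" where
  "M3_E = {(0,1),(0,2),(1,2),(0,3),(1,4),(2,5)}"

end

theory Submission
  imports Defs
begin

text \<open>A bend-free path is a segment of a single grid line, and two segments share a grid
  edge iff they lie on the same line and their integer intervals overlap. Adjacency therefore
  never leaves a grid line, and the vertices on one line form an interval graph. Interval
  graphs have no asteroidal triple: of three pairwise disjoint intervals one lies between the
  other two, and the intervals along any path joining the outer two cover the gap between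
  them, so one of them meets the middle interval. The three leaves of \<open>M\<^sub>2\<close>, and
  likewise those of \<open>M\<^sub>3\<close>, form an asteroidal triple.\<close>

datatype grid_line = Row int | Column int

fun segment :: "grid_line \<Rightarrow> int \<Rightarrow> int \<Rightarrow> grid_edge set" where
  "segment (Row y) lo hi = {HEdge x y | x. lo \<le> x \<and> x < hi}"
| "segment (Column x) lo hi = {VEdge x y | y. lo \<le> y \<and> y < hi}"

lemma straight_path_is_segment:
  "S \<in> straight_paths \<Longrightarrow> \<exists>l lo hi. lo < hi \<and> S = segment l lo hi"
  unfolding straight_paths_def
  by (elim UnE CollectE exE conjE) (metis segment.simps(1), metis segment.simps(2))

definition overlapping :: "('a \<Rightarrow> int) \<Rightarrow> ('a \<Rightarrow> int) \<Rightarrow> 'a \<Rightarrow> 'a \<Rightarrow> bool" where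
  "overlapping lo hi u v \<longleftrightarrow> lo u < hi v \<and> lo v < hi u"

lemma segment_Int_nonempty_iff:
  assumes "lo < hi" "lo' < hi'"
  shows "segment l lo hi \<inter> segment l' lo' hi' \<noteq> {} \<longleftrightarrow> l = l' \<and> lo < hi' \<and> lo' < hi"
proof
  assume "segment l lo hi \<inter> segment l' lo' hi' \<noteq> {}"
  then show "l = l' \<and> lo < hi' \<and> lo' < hi"
    by (cases l; cases l') auto
next
  assume same_line: "l = l' \<and> lo < hi' \<and> lo' < hi"
  show "segment l lo hi \<inter> segment l' lo' hi' \<noteq> {}"
  proof (cases l)
    case (Row y)
    with same_line assms have "HEdge (max lo lo') y \<in> segment l lo hi \<inter> segment l' lo' hi'"
      by auto
    then show ?thesis by blast
  next
    case (Column x)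
    with same_line assms have "VEdge x (max lo lo') \<in> segment l lo hi \<inter> segment l' lo' hi'"
      by auto
    then show ?thesis by blast
  qed
qed

lemma B0_imp_line_interval_model:
  assumes "B0 V adj"
  obtains lo hi :: "'a \<Rightarrow> int" and L :: "'a \<Rightarrow> grid_line"
  where "\<forall>v\<in>V. lo v < hi v"
    and "\<forall>u\<in>V. \<forall>v\<in>V. u \<noteq> v \<longrightarrow> (adj u v \<longleftrightarrow> L u = L v \<and> overlapping lo hi u v)"
proof -
  obtain P where P_straight: "\<forall>v\<in>V. P v \<in> straight_paths"
    and adj_iff: "\<forall>u\<in>V. \<forall>v\<in>V. u \<noteq> v \<longrightarrow> (adj u v \<longleftrightarrow> P u \<inter> P v \<noteq> {})"
    using assms unfolding B0_def by blast
  have "\<forall>v\<in>V. \<exists>l a b. a < b \<and> P v = segment l a b"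
    using P_straight straight_path_is_segment by blast
  then obtain L lo hi where "\<forall>v\<in>V. lo v < hi v \<and> P v = segment (L v) (lo v) (hi v)"
    by metis
  with adj_iff segment_Int_nonempty_iff show ?thesis
    by (intro that[of lo hi L]) (auto simp: overlapping_def)
qed

definition interval_graph :: "'a set \<Rightarrow> ('a \<Rightarrow> 'a \<Rightarrow> bool) \<Rightarrow> bool" where
  "interval_graph V adj \<longleftrightarrow> (\<exists>lo hi :: 'a \<Rightarrow> int. (\<forall>v\<in>V. lo v < hi v) \<and>
     (\<forall>u\<in>V. \<forall>v\<in>V. u \<noteq> v \<longrightarrow> (adj u v \<longleftrightarrow> overlapping lo hi u v)))"

definition path_avoiding :: "'a set \<Rightarrow> ('a \<Rightarrow> 'a \<Rightarrow> bool) \<Rightarrow> 'a \<Rightarrow> 'a \<Rightarrow> 'a \<Rightarrow> bool" where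
  "path_avoiding V adj x z m \<longleftrightarrow> (\<exists>ws. ws \<noteq> [] \<and> hd ws = x \<and> last ws = z \<and> set ws \<subseteq> V \<and>
     successively adj ws \<and> (\<forall>w\<in>set ws. w \<noteq> m \<and> \<not> adj w m))"

definition asteroidal_triple :: "'a set \<Rightarrow> ('a \<Rightarrow> 'a \<Rightarrow> bool) \<Rightarrow> 'a \<Rightarrow> 'a \<Rightarrow> 'a \<Rightarrow> bool" where
  "asteroidal_triple V adj x y z \<longleftrightarrow>
     path_avoiding V adj y z x \<and> path_avoiding V adj x z y \<and> path_avoiding V adj x y z"

lemma path_avoiding_endpoints:
  assumes "path_avoiding V adj x z m"
  shows "x \<in> V" "z \<in> V" "x \<noteq> m" "\<not> adj x m" "z \<noteq> m" "\<not> adj z m"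
  using assms hd_in_set last_in_set unfolding path_avoiding_def by blast+

lemma successively_eq_imp_eq_hd:
  assumes "successively (\<lambda>u v. f u = f v) ws" "w \<in> set ws"
  shows "f w = f (hd ws)"
  using assms
proof (induction ws rule: induct_list012)
  case (3 u v ws)
  have "f u = f v" "successively (\<lambda>u v. f u = f v) (v # ws)"
    using "3.prems"(1) by simp_all
  moreover have "w = u \<or> w \<in> set (v # ws)"
    using "3.prems"(2) by simp
  ultimately show ?case
    using "3.IH"(2) by fastforce
qed simp_all

lemma path_avoiding_restrict_fiber:
  assumes "path_avoiding V adj x z m" and "\<forall>u\<in>V. \<forall>v\<in>V. adj u v \<longrightarrow> f u = f v"
  shows "path_avoiding {v\<in>V. f v = f x} adj x z m" and "f z = f x"
proof -
  obtain ws where ws: "ws \<noteq> []" "hd ws = x" "last ws = z" "set ws \<subseteq> V" "successively adj ws"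
    and avoids: "\<forall>w\<in>set ws. w \<noteq> m \<and> \<not> adj w m"
    using assms(1) unfolding path_avoiding_def by blast
  have "successively (\<lambda>u v. f u = f v) ws"
  proof (rule successively_mono[OF ws(5)])
    fix u v assume "u \<in> set ws" "v \<in> set ws" "adj u v"
    with ws(4) assms(2) show "f u = f v" by blast
  qed
  then have same_class: "\<forall>w\<in>set ws. f w = f (hd ws)"
    using successively_eq_imp_eq_hd by metis
  with ws show "f z = f x"
    using last_in_set by metis
  show "path_avoiding {v\<in>V. f v = f x} adj x z m"
    unfolding path_avoiding_def
  proof (intro exI[of _ ws] conjI)
    show "set ws \<subseteq> {v\<in>V. f v = f x}"
      using ws(2,4) same_class by auto
  qed (use ws avoids in auto)
qed

lemma successively_overlapping_meets:
  assumes "successively (overlapping lo hi) ws" "ws \<noteq> []"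
    and "lo m < hi m" "lo (hd ws) < hi m" "lo m < hi (last ws)"
  shows "\<exists>w\<in>set ws. overlapping lo hi w m"
  using assms
proof (induction ws rule: induct_list012)
  case (3 u v ws)
  show ?case
  proof (cases "overlapping lo hi u m")
    case False
    with "3.prems"(4) have "hi u \<le> lo m" by (auto simp: overlapping_def)
    with "3.prems"(1,3) have "lo v < hi m" by (auto simp: overlapping_def)
    with "3.IH"(2) "3.prems" show ?thesis by auto
  qed auto
qed (auto simp: overlapping_def)

lemma path_avoiding_not_across_interval:
  assumes nonempty: "\<forall>v\<in>V. lo v < hi v"
    and adj_iff: "\<forall>u\<in>V. \<forall>v\<in>V. u \<noteq> v \<longrightarrow> (adj u v \<longleftrightarrow> overlapping lo hi u v)"
    and path: "path_avoiding V adj u w m" and "m \<in> V"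
  shows "\<not> ((hi u \<le> lo m \<and> hi m \<le> lo w) \<or> (hi w \<le> lo m \<and> hi m \<le> lo u))"
proof
  assume between: "(hi u \<le> lo m \<and> hi m \<le> lo w) \<or> (hi w \<le> lo m \<and> hi m \<le> lo u)"
  obtain ws where ws: "ws \<noteq> []" "hd ws = u" "last ws = w" "set ws \<subseteq> V" "successively adj ws"
    and avoids: "\<forall>v\<in>set ws. v \<noteq> m \<and> \<not> adj v m"
    using path unfolding path_avoiding_def by blast
  have overlaps: "successively (overlapping lo hi) ws"
  proof (rule successively_mono[OF ws(5)])
    fix a b assume "a \<in> set ws" "b \<in> set ws" "adj a b"
    with ws(4) nonempty adj_iff show "overlapping lo hi a b"
      by (cases "a = b") (auto simp: overlapping_def)
  qed
  have "u \<in> V" "w \<in> V"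
    using ws(1-4) hd_in_set last_in_set by blast+
  with nonempty \<open>m \<in> V\<close> have "lo u < hi u" "lo w < hi w" "lo m < hi m"
    by auto
  with between consider "lo (hd ws) < hi m" "lo m < hi (last ws)"
    | "lo (hd (rev ws)) < hi m" "lo m < hi (last (rev ws))"
    using ws(1-3) by (force simp: hd_rev last_rev)
  then have "\<exists>v\<in>set ws. overlapping lo hi v m"
  proof cases
    case 1
    then show ?thesis
      using successively_overlapping_meets[OF overlaps ws(1) \<open>lo m < hi m\<close>] by blast
  next
    case 2
    have "successively (overlapping lo hi) (rev ws)"
      using overlaps by (simp add: overlapping_def conj_commute)
    with 2 show ?thesis
      using successively_overlapping_meets[of lo hi "rev ws" m] ws(1) \<open>lo m < hi m\<close> by auto
  qed
  then show False
    using avoids adj_iff ws(4) \<open>m \<in> V\<close> by blast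
qed

lemma interval_graph_no_asteroidal_triple:
  assumes "interval_graph V adj"
  shows "\<not> asteroidal_triple V adj x y z"
proof
  assume "asteroidal_triple V adj x y z"
  then have paths: "path_avoiding V adj y z x" "path_avoiding V adj x z y"
    "path_avoiding V adj x y z" by (simp_all add: asteroidal_triple_def)
  obtain lo hi where nonempty: "\<forall>v\<in>V. lo v < hi v"
    and adj_iff: "\<forall>u\<in>V. \<forall>v\<in>V. u \<noteq> v \<longrightarrow> (adj u v \<longleftrightarrow> overlapping lo hi u v)"
    using assms unfolding interval_graph_def by blast
  note ends = path_avoiding_endpoints[OF paths(1)] path_avoiding_endpoints[OF paths(2)]
    path_avoiding_endpoints[OF paths(3)]
  have "\<not> overlapping lo hi x y" "\<not> overlapping lo hi x z" "\<not> overlapping lo hi y z"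
    using ends adj_iff by metis+
  moreover have "lo x < hi x" "lo y < hi y" "lo z < hi z"
    using ends nonempty by auto
  ultimately consider
      "(hi y \<le> lo x \<and> hi x \<le> lo z) \<or> (hi z \<le> lo x \<and> hi x \<le> lo y)"
    | "(hi x \<le> lo y \<and> hi y \<le> lo z) \<or> (hi z \<le> lo y \<and> hi y \<le> lo x)"
    | "(hi x \<le> lo z \<and> hi z \<le> lo y) \<or> (hi y \<le> lo z \<and> hi z \<le> lo x)"
    unfolding overlapping_def by linarith
  then show False
    using path_avoiding_not_across_interval[OF nonempty adj_iff] paths ends by cases blast+
qed

lemma B0_no_asteroidal_triple:
  assumes "B0 V adj"
  shows "\<not> asteroidal_triple V adj x y z"
proof
  assume "asteroidal_triple V adj x y z"
  then have paths: "path_avoiding V adj y z x" "path_avoiding V adj x z y"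
    "path_avoiding V adj x y z" by (simp_all add: asteroidal_triple_def)
  obtain lo hi and L :: "'a \<Rightarrow> grid_line" where nonempty: "\<forall>v\<in>V. lo v < hi v"
    and adj_iff: "\<forall>u\<in>V. \<forall>v\<in>V. u \<noteq> v \<longrightarrow> (adj u v \<longleftrightarrow> L u = L v \<and> overlapping lo hi u v)"
    using B0_imp_line_interval_model[OF assms] .
  have adj_same_line: "\<forall>u\<in>V. \<forall>v\<in>V. adj u v \<longrightarrow> L u = L v"
    using adj_iff by metis
  define W where "W = {v\<in>V. L v = L x}"
  have "L y = L x"
    using path_avoiding_restrict_fiber(2)[OF paths(1) adj_same_line]
      path_avoiding_restrict_fiber(2)[OF paths(2) adj_same_line] by simp
  then have "asteroidal_triple W adj x y z"
    using path_avoiding_restrict_fiber(1)[OF paths(1) adj_same_line]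
      path_avoiding_restrict_fiber(1)[OF paths(2) adj_same_line]
      path_avoiding_restrict_fiber(1)[OF paths(3) adj_same_line]
    unfolding asteroidal_triple_def W_def by simp
  moreover have "interval_graph W adj"
    unfolding interval_graph_def
  proof (intro exI conjI)
    show "\<forall>v\<in>W. lo v < hi v" using nonempty by (simp add: W_def)
    show "\<forall>u\<in>W. \<forall>v\<in>W. u \<noteq> v \<longrightarrow> (adj u v \<longleftrightarrow> overlapping lo hi u v)"
      using adj_iff by (simp add: W_def)
  qed
  ultimately show False
    using interval_graph_no_asteroidal_triple by metis
qed

lemma M2_asteroidal_triple: "asteroidal_triple M2_V (adj_of M2_E) 4 5 6"
proof -
  have "path_avoiding M2_V (adj_of M2_E) 5 6 4"
    unfolding path_avoiding_def
    by (rule exI[of _ "[5, 2, 0, 3, 6]"]) (simp add: M2_V_def M2_E_def adj_of_def)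
  moreover have "path_avoiding M2_V (adj_of M2_E) 4 6 5"
    unfolding path_avoiding_def
    by (rule exI[of _ "[4, 1, 0, 3, 6]"]) (simp add: M2_V_def M2_E_def adj_of_def)
  moreover have "path_avoiding M2_V (adj_of M2_E) 4 5 6"
    unfolding path_avoiding_def
    by (rule exI[of _ "[4, 1, 0, 2, 5]"]) (simp add: M2_V_def M2_E_def adj_of_def)
  ultimately show ?thesis
    unfolding asteroidal_triple_def by blast
qed

lemma M3_asteroidal_triple: "asteroidal_triple M3_V (adj_of M3_E) 3 4 5"
proof -
  have "path_avoiding M3_V (adj_of M3_E) 4 5 3"
    unfolding path_avoiding_def
    by (rule exI[of _ "[4, 1, 2, 5]"]) (simp add: M3_V_def M3_E_def adj_of_def)
  moreover have "path_avoiding M3_V (adj_of M3_E) 3 5 4"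
    unfolding path_avoiding_def
    by (rule exI[of _ "[3, 0, 2, 5]"]) (simp add: M3_V_def M3_E_def adj_of_def)
  moreover have "path_avoiding M3_V (adj_of M3_E) 3 4 5"
    unfolding path_avoiding_def
    by (rule exI[of _ "[3, 0, 1, 4]"]) (simp add: M3_V_def M3_E_def adj_of_def)
  ultimately show ?thesis
    unfolding asteroidal_triple_def by blast
qed

theorem lemma5p5:
  shows "\<not> B0 M2_V (adj_of M2_E) \<and> \<not> B0 M3_V (adj_of M3_E)"
  using B0_no_asteroidal_triple M2_asteroidal_triple M3_asteroidal_triple by metis

end
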